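(* Let $G$ be a finitely generated group with a polynomial growth function. For any polynomial $t(n)$, $\mathsf{CF}\not\subseteq \mathfrak{L}(G)^w_{t(n)}$.
   Context: For a group $G$ with identity $e$, a $G$-automaton is a tuple $(Q,\Sigma,G,\delta,q_0,Q_a)$ where $Q$ is a finite set of states, $\Sigma$ a finite input alphabet, $q_0\in Q$ the initial state, $Q_a\subseteq Q$ the accepting states, and $\delta$ assigns to each $(q,\sigma)\in Q\times(\Sigma\cup\{\varepsilon\})$ a finite set of pairs $(q',m)\in Q\times G$. The register holds an element of $G$, initially $e$; using a transition $(q',m)\in\delta(q,\sigma)$ (one step) the automaton reads $\sigma$ (or nothing), moves to $q'$ and replaces the register content $x$ by $xm$. A word is accepted if some computation reads it entirely and ends in an accepting state with register equal to $e$. A $G$-automaton recognizing $\mathtt{L}$ is weakly $t(n)$ time-bounded if every $x\in\mathtt{L}$ with $|x|=n$ has an accepting computation of at most $t(n)$ steps; $\mathfrak{L}(G)^w_{t(n)}$ is the class of languages recognized by such automata. The growth function of $G$ w.r.t. a finite generating set $X$ counts elements representable by words of length at most $n$ over $X\cup X^{-1}$. $\mathsf{CF}$ is the class of context-free languages. *)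

theory Defs
  imports "HOL-Algebra.Generated_Groups" "HOL-Computational_Algebra.Polynomial"
begin

definition ball_words :: "('g, 'b) monoid_scheme \<Rightarrow> 'g set \<Rightarrow> nat \<Rightarrow> 'g set" where
  "ball_words G X n =
     {g. \<exists>ws. length ws \<le> n \<and> set ws \<subseteq> X \<union> (\<lambda>x. inv\<^bsub>G\<^esub> x) ` X
             \<and> g = foldr (\<lambda>a b. a \<otimes>\<^bsub>G\<^esub> b) ws \<one>\<^bsub>G\<^esub>}"

definition growth :: "('g, 'b) monoid_scheme \<Rightarrow> 'g set \<Rightarrow> nat \<Rightarrow> nat" where
  "growth G X n = card (ball_words G X n)"

definition finite_gen_set :: "('g, 'b) monoid_scheme \<Rightarrow> 'g set \<Rightarrow> bool" where
  "finite_gen_set G X \<longleftrightarrow> finite X \<and> X \<subseteq> carrier G \<and> generate G X = carrier G"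

definition polynomial_growth :: "('g, 'b) monoid_scheme \<Rightarrow> 'g set \<Rightarrow> bool" where
  "polynomial_growth G X \<longleftrightarrow> (\<exists>C d::nat. \<forall>n\<ge>1. growth G X n \<le> C * n ^ d)"

text \<open>States are natural numbers; None stands for an epsilon-move.\<close>
record ('a, 'g) gaut =
  states :: "nat set"
  alph   :: "'a set"
  init   :: nat
  acc    :: "nat set"
  delta  :: "nat \<Rightarrow> 'a option \<Rightarrow> (nat \<times> 'g) set"

definition is_gaut :: "('g, 'b) monoid_scheme \<Rightarrow> ('a, 'g) gaut \<Rightarrow> bool" where
  "is_gaut G A \<longleftrightarrow> finite (states A) \<and> finite (alph A) \<and> init A \<in> states A
     \<and> acc A \<subseteq> states A
     \<and> (\<forall>q s. finite (delta A q s) \<and> delta A q s \<subseteq> states A \<times> carrier G)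
     \<and> (\<forall>q s. delta A q s \<noteq> {} \<longrightarrow> q \<in> states A \<and> (\<forall>\<sigma>. s = Some \<sigma> \<longrightarrow> \<sigma> \<in> alph A))"

inductive comp :: "('g, 'b) monoid_scheme \<Rightarrow> ('a, 'g) gaut \<Rightarrow> nat \<Rightarrow> 'g \<Rightarrow> 'a list
                    \<Rightarrow> nat \<Rightarrow> 'g \<Rightarrow> nat \<Rightarrow> bool"
  for G A where
  comp_nil: "comp G A q x [] q x 0"
| comp_eps: "(q1, m) \<in> delta A q None \<Longrightarrow> comp G A q1 (x \<otimes>\<^bsub>G\<^esub> m) w q' y k
              \<Longrightarrow> comp G A q x w q' y (Suc k)"
| comp_sym: "(q1, m) \<in> delta A q (Some \<sigma>) \<Longrightarrow> comp G A q1 (x \<otimes>\<^bsub>G\<^esub> m) w q' y k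
              \<Longrightarrow> comp G A q x (\<sigma> # w) q' y (Suc k)"

definition accepting_comp :: "('g, 'b) monoid_scheme \<Rightarrow> ('a, 'g) gaut \<Rightarrow> 'a list \<Rightarrow> nat \<Rightarrow> bool" where
  "accepting_comp G A w k \<longleftrightarrow>
     (\<exists>q'. q' \<in> acc A \<and> comp G A (init A) \<one>\<^bsub>G\<^esub> w q' \<one>\<^bsub>G\<^esub> k)"

definition gaut_lang :: "('g, 'b) monoid_scheme \<Rightarrow> ('a, 'g) gaut \<Rightarrow> 'a list set" where
  "gaut_lang G A = {w. \<exists>k. accepting_comp G A w k}"

definition weak_time_class :: "('g, 'b) monoid_scheme \<Rightarrow> (nat \<Rightarrow> real) \<Rightarrow> 'a list set set" where
  "weak_time_class G t = {L. \<exists>A::('a, 'g) gaut. is_gaut G A \<and> gaut_lang G A = L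
      \<and> (\<forall>w\<in>L. \<exists>k. real k \<le> t (length w) \<and> accepting_comp G A w k)}"

text \<open>A context-free grammar: finite set of productions with nonterminals (nat, Inl) and
  terminals (Inr); language of start symbol S.\<close>
definition derive1 :: "(nat \<times> (nat + 'a) list) set \<Rightarrow> (nat + 'a) list \<Rightarrow> (nat + 'a) list \<Rightarrow> bool" where
  "derive1 P u v \<longleftrightarrow> (\<exists>\<alpha> \<beta> N \<gamma>. u = \<alpha> @ [Inl N] @ \<beta> \<and> (N, \<gamma>) \<in> P \<and> v = \<alpha> @ \<gamma> @ \<beta>)"

definition cfg_lang :: "(nat \<times> (nat + 'a) list) set \<Rightarrow> nat \<Rightarrow> 'a list set" where
  "cfg_lang P S = {w. (derive1 P)\<^sup>*\<^sup>* [Inl S] (map Inr w)}"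

definition CF :: "'a list set set" where
  "CF = {L. \<exists>P S. finite P \<and> L = cfg_lang P S}"

end

theory Submission
  imports Defs
begin

text \<open>The witness is the context-free language of marked palindromes \<open>u 2 u\<^sup>R\<close>, \<open>u \<in> {0,1}\<^sup>*\<close>.
  Let \<open>K\<close> bound the word length of the register labels of an automaton recognizing it within
  time \<open>t\<close>. After reading \<open>u 2\<close>, an accepting computation on \<open>u 2 u\<^sup>R\<close> of at most \<open>t(2n+1)\<close> steps
  is in a configuration whose register lies in the ball of radius \<open>K t(2n+1)\<close>. Two words \<open>u \<noteq> v\<close>
  of length \<open>n\<close> cannot pass through the same configuration, since splicing the computations would
  accept \<open>u 2 v\<^sup>R\<close>. Hence \<open>2\<^sup>n\<close> is at most the number of states times the growth function at
  \<open>K t(2n+1)\<close>, a polynomial in \<open>n\<close>: a contradiction for large \<open>n\<close>.\<close>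

definition poly_bounded :: "(nat \<Rightarrow> nat) \<Rightarrow> bool" where
  "poly_bounded f \<longleftrightarrow> (\<exists>C d. \<forall>n. f n \<le> C * Suc n ^ d)"

lemma poly_bounded_const: "poly_bounded (\<lambda>_. c)"
  unfolding poly_bounded_def by (intro exI[of _ c] exI[of _ 0]) simp

lemma poly_bounded_affine: "poly_bounded (\<lambda>n. a * n + b)"
  unfolding poly_bounded_def by (intro exI[of _ "a + b"] exI[of _ 1]) (simp add: algebra_simps)

lemma poly_bounded_mult:
  assumes "poly_bounded f" "poly_bounded g"
  shows "poly_bounded (\<lambda>n. f n * g n)"
proof -
  obtain C d C' d' where "\<And>n. f n \<le> C * Suc n ^ d" "\<And>n. g n \<le> C' * Suc n ^ d'"
    using assms unfolding poly_bounded_def by metis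
  then have "f n * g n \<le> (C * Suc n ^ d) * (C' * Suc n ^ d')" for n
    by (rule mult_le_mono)
  then have "f n * g n \<le> (C * C') * Suc n ^ (d + d')" for n
    by (simp add: power_add ac_simps)
  then show ?thesis unfolding poly_bounded_def by blast
qed

lemma poly_bounded_comp:
  assumes "poly_bounded f" "poly_bounded g"
  shows "poly_bounded (\<lambda>n. f (g n))"
proof -
  obtain C d C' d' where f: "\<And>n. f n \<le> C * Suc n ^ d" and g: "\<And>n. g n \<le> C' * Suc n ^ d'"
    using assms unfolding poly_bounded_def by metis
  have "f (g n) \<le> (C * Suc C' ^ d) * Suc n ^ (d' * d)" for n
  proof -
    have "1 \<le> Suc n ^ d'" by simp
    with g[of n] have "Suc (g n) \<le> Suc C' * Suc n ^ d'" by (simp only: mult_Suc)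
    then have "Suc (g n) ^ d \<le> Suc C' ^ d * Suc n ^ (d' * d)"
      by (metis power_mono power_mult power_mult_distrib zero_le)
    then have "C * Suc (g n) ^ d \<le> C * (Suc C' ^ d * Suc n ^ (d' * d))"
      by (rule mult_le_mono2)
    with f[of "g n"] have "f (g n) \<le> C * (Suc C' ^ d * Suc n ^ (d' * d))" by (rule le_trans)
    then show ?thesis by (simp only: mult.assoc)
  qed
  then show ?thesis unfolding poly_bounded_def by blast
qed

lemma poly_bounded_less_two_pow:
  assumes "poly_bounded f"
  shows "\<exists>n. f n < 2 ^ n"
proof -
  obtain C d where f: "\<And>n. f n \<le> C * Suc n ^ d"
    using assms unfolding poly_bounded_def by blast
  define L :: real where "L = ln 2"
  have "L > 0" by (simp add: L_def)
  have "filterlim (\<lambda>n. L * real (Suc n)) at_top sequentially"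
    by (intro filterlim_tendsto_pos_mult_at_top[OF tendsto_const \<open>L > 0\<close>]
        filterlim_compose[OF filterlim_real_sequentially filterlim_Suc])
  then have "((\<lambda>n. (L * real (Suc n)) ^ d / exp (L * real (Suc n))) \<longlongrightarrow> 0) sequentially"
    by (rule filterlim_compose[OF tendsto_power_div_exp_0])
  then have "((\<lambda>n. (2 * real C / L ^ d) * ((L * real (Suc n)) ^ d / exp (L * real (Suc n))))
      \<longlongrightarrow> 0) sequentially"
    by (rule tendsto_mult_right_zero)
  moreover have "(2 * real C / L ^ d) * ((L * real (Suc n)) ^ d / exp (L * real (Suc n)))
      = real (C * Suc n ^ d) / 2 ^ n" for n
  proof -
    have "exp (L * real (Suc n)) = exp L ^ Suc n"
      by (metis exp_of_nat_mult mult.commute)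
    also have "\<dots> = 2 ^ Suc n" by (simp add: L_def)
    finally have "exp (L * real (Suc n)) = 2 ^ Suc n" .
    then show ?thesis using \<open>L > 0\<close> by (simp add: power_mult_distrib)
  qed
  ultimately have "((\<lambda>n. real (C * Suc n ^ d) / 2 ^ n) \<longlongrightarrow> 0) sequentially" by simp
  then have "\<forall>\<^sub>F n in sequentially. real (C * Suc n ^ d) / 2 ^ n < 1"
    by (rule order_tendstoD(2)) simp
  then obtain n where "real (C * Suc n ^ d) / 2 ^ n < 1"
    by (meson eventually_happens' sequentially_bot)
  then have "real (C * Suc n ^ d) < real (2 ^ n)" by (simp add: divide_less_eq)
  then have "C * Suc n ^ d < 2 ^ n" by (simp only: of_nat_less_iff)
  then show ?thesis using f[of n] le_less_trans by blast
qed

lemma poly_dominated_by_poly_bounded: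
  fixes p :: "real poly"
  shows "\<exists>f. poly_bounded f \<and> (\<forall>n. poly p (real n) \<le> real (f n))"
proof -
  define S where "S = (\<Sum>i\<le>degree p. \<bar>coeff p i\<bar>)"
  have "poly p (real n) \<le> real (nat \<lceil>S\<rceil> * Suc n ^ degree p)" for n
  proof -
    have "poly p (real n) \<le> (\<Sum>i\<le>degree p. \<bar>coeff p i * real n ^ i\<bar>)"
      unfolding poly_altdef by (rule order_trans[OF abs_ge_self sum_abs])
    also have "\<dots> \<le> (\<Sum>i\<le>degree p. \<bar>coeff p i\<bar> * real (Suc n) ^ degree p)"
    proof (rule sum_mono)
      fix i assume "i \<in> {..degree p}"
      have "real n ^ i \<le> real (Suc n) ^ i" by (intro power_mono) auto
      also have "\<dots> \<le> real (Suc n) ^ degree p" using \<open>i \<in> _\<close> by (intro power_increasing) auto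
      finally have "real n ^ i \<le> real (Suc n) ^ degree p" .
      then show "\<bar>coeff p i * real n ^ i\<bar> \<le> \<bar>coeff p i\<bar> * real (Suc n) ^ degree p"
        by (simp add: abs_mult mult_left_mono)
    qed
    also have "\<dots> = S * real (Suc n) ^ degree p" by (simp add: S_def sum_distrib_right)
    also have "\<dots> \<le> real (nat \<lceil>S\<rceil> * Suc n ^ degree p)"
      by (simp add: mult_right_mono real_nat_ceiling_ge)
    finally show ?thesis .
  qed
  moreover have "poly_bounded (\<lambda>n. nat \<lceil>S\<rceil> * Suc n ^ degree p)"
    unfolding poly_bounded_def by blast
  ultimately show ?thesis by blast
qed

lemma ball_words_mono: "n \<le> m \<Longrightarrow> ball_words G X n \<subseteq> ball_words G X m"
  unfolding ball_words_def using le_trans by blast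

lemma ball_words_0: "ball_words G X 0 = {\<one>\<^bsub>G\<^esub>}"
  unfolding ball_words_def by auto

lemma finite_ball_words:
  assumes "finite X"
  shows "finite (ball_words G X n)"
proof -
  let ?W = "{ws. set ws \<subseteq> X \<union> (\<lambda>x. inv\<^bsub>G\<^esub> x) ` X \<and> length ws \<le> n}"
  have "ball_words G X n = (\<lambda>ws. foldr (\<lambda>a b. a \<otimes>\<^bsub>G\<^esub> b) ws \<one>\<^bsub>G\<^esub>) ` ?W"
    unfolding ball_words_def by auto
  moreover have "finite ?W"
    using assms by (intro finite_lists_length_le) auto
  ultimately show ?thesis by simp
qed

lemma polynomial_growth_imp_poly_bounded:
  assumes "polynomial_growth G X"
  shows "poly_bounded (growth G X)"
proof -
  obtain C d where C: "\<forall>n\<ge>1. growth G X n \<le> C * n ^ d"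
    using assms unfolding polynomial_growth_def by blast
  have "growth G X n \<le> Suc C * Suc n ^ d" for n
  proof (cases "n = 0")
    case True
    then show ?thesis by (simp add: growth_def ball_words_0)
  next
    case False
    then have "growth G X n \<le> C * n ^ d" using C by simp
    also have "\<dots> \<le> Suc C * Suc n ^ d" by (intro mult_le_mono power_mono) auto
    finally show ?thesis .
  qed
  then show ?thesis unfolding poly_bounded_def by blast
qed

definition gaut_labels :: "('a, 'g) gaut \<Rightarrow> 'g set" where
  "gaut_labels A = {m. \<exists>q s q'. (q', m) \<in> delta A q s}"

lemma finite_gaut_labels:
  assumes "is_gaut G A"
  shows "finite (gaut_labels A)"
proof (rule finite_subset)
  show "gaut_labels A \<subseteq> (\<Union>q\<in>states A. \<Union>s\<in>insert None (Some ` alph A). snd ` delta A q s)"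
  proof
    fix m assume "m \<in> gaut_labels A"
    then obtain q s q' where m: "(q', m) \<in> delta A q s" by (auto simp: gaut_labels_def)
    then have q: "q \<in> states A" and "\<forall>\<sigma>. s = Some \<sigma> \<longrightarrow> \<sigma> \<in> alph A"
      using assms unfolding is_gaut_def by blast+
    then have "s \<in> insert None (Some ` alph A)" by (cases s) auto
    with q m show "m \<in> (\<Union>q\<in>states A. \<Union>s\<in>insert None (Some ` alph A). snd ` delta A q s)"
      by force
  qed
  show "finite (\<Union>q\<in>states A. \<Union>s\<in>insert None (Some ` alph A). snd ` delta A q s)"
    using assms unfolding is_gaut_def by auto
qed

lemma gaut_labels_subset_carrier: "is_gaut G A \<Longrightarrow> gaut_labels A \<subseteq> carrier G"
  unfolding is_gaut_def gaut_labels_def by fastforce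

lemma comp_states:
  assumes "comp G A q x w q' y k" "is_gaut G A" "q \<in> states A"
  shows "q' \<in> states A"
  using assms by (induction rule: comp.induct) (auto simp: is_gaut_def)

lemma comp_append:
  assumes "comp G A q x u q1 x1 k1" "comp G A q1 x1 v q' y k2"
  shows "comp G A q x (u @ v) q' y (k1 + k2)"
  using assms by (induction rule: comp.induct) (auto intro: comp.intros)

lemma comp_appendE:
  assumes "comp G A q x (u @ v) q' y k"
  obtains q1 x1 k1 k2 where "comp G A q x u q1 x1 k1" "comp G A q1 x1 v q' y k2" "k = k1 + k2"
proof -
  have "w = u @ v \<Longrightarrow>
      \<exists>q1 x1 k1 k2. comp G A q x u q1 x1 k1 \<and> comp G A q1 x1 v q' y k2 \<and> k = k1 + k2"
    if "comp G A q x w q' y k" for w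
    using that
  proof (induction arbitrary: u rule: comp.induct)
    case (comp_nil q x)
    then show ?case by (auto intro: comp.intros)
  next
    case (comp_eps q1 m q x w q' y k)
    then show ?case by (metis add_Suc comp.comp_eps)
  next
    case (comp_sym q1 m q \<sigma> x w q' y k)
    show ?case
    proof (cases u)
      case Nil
      with comp_sym show ?thesis by (metis add_0 append_Nil comp.comp_nil comp.comp_sym)
    next
      case (Cons a u')
      with comp_sym show ?thesis by (metis add_Suc append_Cons comp.comp_sym list.inject)
    qed
  qed
  with assms that show ?thesis by blast
qed

definition marked_palindromes :: "nat list set" where
  "marked_palindromes = {u @ [2] @ rev u | u. set u \<subseteq> {0, 1}}"

lemma marked_palindrome_halves_eq:
  assumes "u @ [2] @ rev v \<in> marked_palindromes" "set u \<subseteq> {0, 1}" "set v \<subseteq> {0, 1}"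
  shows "u = v"
proof -
  obtain w where w: "set w \<subseteq> {0, 1}" "u @ 2 # rev v = w @ 2 # rev w"
    using assms(1) unfolding marked_palindromes_def by auto
  have "(2::nat) \<notin> set u" "(2::nat) \<notin> set (rev v)" using assms(2,3) by auto
  with w(2) have "u = w \<and> rev v = rev w" using append_Cons_eq_iff[of 2 u "rev v" w "rev w"] by blast
  then show ?thesis by simp
qed

definition marked_palindrome_grammar :: "(nat \<times> (nat + nat) list) set" where
  "marked_palindrome_grammar = {(0, [Inr 0, Inl 0, Inr 0]), (0, [Inr 1, Inl 0, Inr 1]), (0, [Inr 2])}"

lemma marked_palindrome_grammar_derives_centred:
  "set u \<subseteq> {0, 1} \<Longrightarrow>
    (derive1 marked_palindrome_grammar)\<^sup>*\<^sup>* [Inl 0] (map Inr u @ [Inl 0] @ map Inr (rev u))"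
proof (induction u rule: rev_induct)
  case Nil
  then show ?case by simp
next
  case (snoc a u)
  then have "(0, [Inr a, Inl 0, Inr a]) \<in> marked_palindrome_grammar"
    by (auto simp: marked_palindrome_grammar_def)
  then have "derive1 marked_palindrome_grammar (map Inr u @ [Inl 0] @ map Inr (rev u))
      (map Inr u @ [Inr a, Inl 0, Inr a] @ map Inr (rev u))"
    unfolding derive1_def by blast
  with snoc show ?case by simp
qed

lemma marked_palindrome_grammar_sentential_forms:
  assumes "(derive1 marked_palindrome_grammar)\<^sup>*\<^sup>* [Inl 0] v"
  shows "\<exists>u. set u \<subseteq> {0, 1} \<and>
    (v = map Inr u @ [Inl 0] @ map Inr (rev u) \<or> v = map Inr (u @ [2] @ rev u))"
  using assms
proof (induction rule: rtranclp_induct)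
  case base
  then show ?case by (intro exI[of _ "[]"]) auto
next
  case (step v v')
  then obtain u where u: "set u \<subseteq> {0, 1}"
    "v = map Inr u @ [Inl 0] @ map Inr (rev u) \<or> v = map Inr (u @ [2] @ rev u)" by blast
  from step(2) obtain \<alpha> \<beta> \<gamma> where
    d: "v = \<alpha> @ [Inl 0] @ \<beta>" "(0, \<gamma>) \<in> marked_palindrome_grammar" "v' = \<alpha> @ \<gamma> @ \<beta>"
    unfolding derive1_def marked_palindrome_grammar_def by blast
  then have "Inl 0 \<in> set v" by simp
  then have "v = map Inr u @ [Inl 0] @ map Inr (rev u)" using u(2) by auto
  with d(1) have "map Inr u @ Inl 0 # map Inr (rev u) = \<alpha> @ Inl 0 # \<beta>" by simp
  then have \<alpha>: "\<alpha> = map Inr u" and \<beta>: "\<beta> = map Inr (rev u)"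
    using append_Cons_eq_iff[of "Inl 0" "map Inr u" "map Inr (rev u)" \<alpha> \<beta>] by auto
  from d(2) consider "\<gamma> = [Inr 0, Inl 0, Inr 0]" | "\<gamma> = [Inr 1, Inl 0, Inr 1]" | "\<gamma> = [Inr 2]"
    by (auto simp: marked_palindrome_grammar_def)
  then show ?case
  proof cases
    case 1
    then show ?thesis using u(1) d(3) \<alpha> \<beta> by (intro exI[of _ "u @ [0]"]) auto
  next
    case 2
    then show ?thesis using u(1) d(3) \<alpha> \<beta> by (intro exI[of _ "u @ [1]"]) auto
  next
    case 3
    then show ?thesis using u(1) d(3) \<alpha> \<beta> by (intro exI[of _ u]) auto
  qed
qed

lemma cfg_lang_marked_palindrome_grammar: "cfg_lang marked_palindrome_grammar 0 = marked_palindromes"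
proof
  show "cfg_lang marked_palindrome_grammar 0 \<subseteq> marked_palindromes"
  proof
    fix w assume "w \<in> cfg_lang marked_palindrome_grammar 0"
    then have "(derive1 marked_palindrome_grammar)\<^sup>*\<^sup>* [Inl 0] (map Inr w)"
      by (simp add: cfg_lang_def)
    then obtain u where u: "set u \<subseteq> {0, 1}"
      "(map Inr w :: (nat + nat) list) = map Inr u @ [Inl 0] @ map Inr (rev u)
        \<or> (map Inr w :: (nat + nat) list) = map Inr (u @ [2] @ rev u)"
      using marked_palindrome_grammar_sentential_forms by blast
    have "Inl 0 \<notin> set (map Inr w :: (nat + nat) list)"
      "Inl 0 \<in> set (map Inr u @ [Inl 0] @ map Inr (rev u) :: (nat + nat) list)" by auto
    then have "(map Inr w :: (nat + nat) list) \<noteq> map Inr u @ [Inl 0] @ map Inr (rev u)" by force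
    with u(2) have "(map Inr w :: (nat + nat) list) = map Inr (u @ [2] @ rev u)" by blast
    then have "w = u @ [2] @ rev u" by (simp only: inj_map_eq_map[OF inj_Inr])
    with u(1) show "w \<in> marked_palindromes" by (auto simp: marked_palindromes_def)
  qed
  show "marked_palindromes \<subseteq> cfg_lang marked_palindrome_grammar 0"
  proof
    fix w assume "w \<in> marked_palindromes"
    then obtain u where u: "set u \<subseteq> {0, 1}" "w = u @ [2] @ rev u"
      by (auto simp: marked_palindromes_def)
    have "derive1 marked_palindrome_grammar (map Inr u @ [Inl 0] @ map Inr (rev u))
        (map Inr u @ [Inr 2] @ map Inr (rev u))"
      unfolding derive1_def marked_palindrome_grammar_def by blast
    with marked_palindrome_grammar_derives_centred[OF u(1)]
    have "(derive1 marked_palindrome_grammar)\<^sup>*\<^sup>* [Inl 0] (map Inr u @ [Inr 2] @ map Inr (rev u))"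
      by (rule rtranclp.rtrancl_into_rtrancl)
    with u(2) show "w \<in> cfg_lang marked_palindrome_grammar 0" by (simp add: cfg_lang_def)
  qed
qed

lemma marked_palindromes_in_CF: "marked_palindromes \<in> CF"
proof -
  have "finite marked_palindrome_grammar" by (simp add: marked_palindrome_grammar_def)
  then show ?thesis unfolding CF_def
    by (intro CollectI exI[of _ marked_palindrome_grammar] exI[of _ 0])
      (simp add: cfg_lang_marked_palindrome_grammar)
qed

context group
begin

lemma foldr_mult_closed: "set ws \<subseteq> carrier G \<Longrightarrow> foldr (\<lambda>a b. a \<otimes> b) ws \<one> \<in> carrier G"
  by (induction ws) auto

lemma foldr_mult_append:
  "set ws \<subseteq> carrier G \<Longrightarrow> set vs \<subseteq> carrier G \<Longrightarrow>
   foldr (\<lambda>a b. a \<otimes> b) (ws @ vs) \<one> = foldr (\<lambda>a b. a \<otimes> b) ws \<one> \<otimes> foldr (\<lambda>a b. a \<otimes> b) vs \<one>"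
  by (induction ws) (auto simp: m_assoc foldr_mult_closed)

lemma ball_words_mult:
  assumes "X \<subseteq> carrier G" "a \<in> ball_words G X n" "b \<in> ball_words G X m"
  shows "a \<otimes> b \<in> ball_words G X (n + m)"
proof -
  obtain ws vs where ws: "length ws \<le> n" "set ws \<subseteq> X \<union> (\<lambda>x. inv x) ` X" "a = foldr (\<lambda>a b. a \<otimes> b) ws \<one>"
    and vs: "length vs \<le> m" "set vs \<subseteq> X \<union> (\<lambda>x. inv x) ` X" "b = foldr (\<lambda>a b. a \<otimes> b) vs \<one>"
    using assms(2,3) unfolding ball_words_def by blast
  have "X \<union> (\<lambda>x. inv x) ` X \<subseteq> carrier G" using assms(1) by auto
  with ws vs have "a \<otimes> b = foldr (\<lambda>a b. a \<otimes> b) (ws @ vs) \<one>"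
    by (metis foldr_mult_append subset_trans)
  with ws vs show ?thesis unfolding ball_words_def
    by (intro CollectI exI[of _ "ws @ vs"]) auto
qed

lemma generate_subset_ball_words:
  assumes "X \<subseteq> carrier G"
  shows "generate G X \<subseteq> (\<Union>n. ball_words G X n)"
proof
  fix g assume "g \<in> generate G X"
  then show "g \<in> (\<Union>n. ball_words G X n)"
  proof (induction rule: generate.induct)
    case one
    have "\<one> \<in> ball_words G X 0" by (simp add: ball_words_0)
    then show ?case by blast
  next
    case (incl h)
    then have "h \<in> ball_words G X 1"
      unfolding ball_words_def using assms by (intro CollectI exI[of _ "[h]"]) auto
    then show ?case by blast
  next
    case (inv h)
    then have "inv h \<in> ball_words G X 1"
      unfolding ball_words_def using assms by (intro CollectI exI[of _ "[inv h]"]) auto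
    then show ?case by blast
  next
    case (eng h1 h2)
    then show ?case using ball_words_mult[OF assms] by blast
  qed
qed

lemma finite_subset_ball_words:
  assumes "X \<subseteq> carrier G" "finite M" "M \<subseteq> generate G X"
  shows "\<exists>K. M \<subseteq> ball_words G X K"
  using assms(2,3)
proof (induction rule: finite_induct)
  case empty
  then show ?case by blast
next
  case (insert g M)
  then obtain K n where "M \<subseteq> ball_words G X K" "g \<in> ball_words G X n"
    using generate_subset_ball_words[OF assms(1)] by blast
  moreover have "ball_words G X K \<subseteq> ball_words G X (max K n)"
    "ball_words G X n \<subseteq> ball_words G X (max K n)"
    by (simp_all add: ball_words_mono)
  ultimately have "insert g M \<subseteq> ball_words G X (max K n)" by blast
  then show ?case by blast
qed

lemma comp_register_in_ball_words:
  assumes "comp G A q x w q' y k" "X \<subseteq> carrier G" "gaut_labels A \<subseteq> ball_words G X K"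
    and "x \<in> ball_words G X r"
  shows "y \<in> ball_words G X (r + K * k)"
  using assms(1,4)
proof (induction arbitrary: r rule: comp.induct)
  case (comp_nil q x)
  then show ?case by simp
next
  case (comp_eps q1 m q x w q' y k)
  then have "m \<in> ball_words G X K" using assms(3) unfolding gaut_labels_def by blast
  then have "x \<otimes> m \<in> ball_words G X (r + K)" using ball_words_mult[OF assms(2)] comp_eps.prems by blast
  then have "y \<in> ball_words G X (r + K + K * k)" by (rule comp_eps.IH)
  then show ?case by (simp add: algebra_simps)
next
  case (comp_sym q1 m q \<sigma> x w q' y k)
  then have "m \<in> ball_words G X K" using assms(3) unfolding gaut_labels_def by blast
  then have "x \<otimes> m \<in> ball_words G X (r + K)" using ball_words_mult[OF assms(2)] comp_sym.prems by blast
  then have "y \<in> ball_words G X (r + K + K * k)" by (rule comp_sym.IH)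
  then show ?case by (simp add: algebra_simps)
qed

lemma two_pow_le_card_states_mult_growth:
  fixes A :: "(nat, 'a) gaut"
  assumes X: "finite X" "X \<subseteq> carrier G"
    and A: "is_gaut G A" "gaut_labels A \<subseteq> ball_words G X K" "gaut_lang G A \<subseteq> marked_palindromes"
    and fast: "\<forall>w\<in>marked_palindromes. \<exists>k\<le>T (length w). accepting_comp G A w k"
  shows "2 ^ n \<le> card (states A) * growth G X (K * T (2 * n + 1))"
proof -
  define U where "U = {u :: nat list. set u \<subseteq> {0, 1} \<and> length u = n}"
  define Cf where "Cf = states A \<times> ball_words G X (K * T (2 * n + 1))"
  define crossing where "crossing u c \<longleftrightarrow> c \<in> Cf
      \<and> (\<exists>k. comp G A (init A) \<one> (u @ [2]) (fst c) (snd c) k)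
      \<and> (\<exists>qf k. qf \<in> acc A \<and> comp G A (fst c) (snd c) (rev u) qf \<one> k)" for u c
  have "\<exists>c. crossing u c" if "u \<in> U" for u
  proof -
    from that have "u @ [2] @ rev u \<in> marked_palindromes" "length (u @ [2] @ rev u) = 2 * n + 1"
      unfolding U_def marked_palindromes_def by auto
    with fast obtain k where "k \<le> T (2 * n + 1)" "accepting_comp G A (u @ [2] @ rev u) k"
      by metis
    then obtain qf where k: "qf \<in> acc A" "comp G A (init A) \<one> ((u @ [2]) @ rev u) qf \<one> k"
      unfolding accepting_comp_def by auto
    obtain q x k1 k2 where
      reach: "comp G A (init A) \<one> (u @ [2]) q x k1" and
      leave: "comp G A q x (rev u) qf \<one> k2" and "k = k1 + k2"
      using k(2) by (rule comp_appendE)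
    have "x \<in> ball_words G X (0 + K * k1)"
      by (rule comp_register_in_ball_words[OF reach X(2) A(2)]) (simp add: ball_words_0)
    moreover have "K * k1 \<le> K * T (2 * n + 1)"
      using \<open>k \<le> T (2 * n + 1)\<close> \<open>k = k1 + k2\<close> by simp
    ultimately have "x \<in> ball_words G X (K * T (2 * n + 1))"
      using ball_words_mono[of "K * k1" "K * T (2 * n + 1)" G X] by auto
    moreover have "q \<in> states A" using comp_states[OF reach A(1)] A(1) by (simp add: is_gaut_def)
    ultimately have "crossing u (q, x)"
      unfolding crossing_def Cf_def using reach leave k(1) by auto
    then show ?thesis by blast
  qed
  then obtain f where f: "\<And>u. u \<in> U \<Longrightarrow> crossing u (f u)" by metis
  have "inj_on f U"
  proof
    fix u v assume uv: "u \<in> U" "v \<in> U" "f u = f v"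
    then obtain k1 k2 qf where "comp G A (init A) \<one> (u @ [2]) (fst (f u)) (snd (f u)) k1"
      "qf \<in> acc A" "comp G A (fst (f u)) (snd (f u)) (rev v) qf \<one> k2"
      using f unfolding crossing_def by metis
    then have "accepting_comp G A ((u @ [2]) @ rev v) (k1 + k2)"
      unfolding accepting_comp_def by (blast intro: comp_append)
    then have "u @ [2] @ rev v \<in> marked_palindromes"
      using A(3) unfolding gaut_lang_def by auto
    with uv show "u = v" unfolding U_def by (blast intro: marked_palindrome_halves_eq)
  qed
  moreover have "f ` U \<subseteq> Cf" using f unfolding crossing_def by blast
  moreover have "finite Cf"
    using A(1) finite_ball_words[OF X(1)] unfolding Cf_def is_gaut_def by blast
  ultimately have "card U \<le> card Cf" by (rule card_inj_on_le)
  moreover have "card U = 2 ^ n"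
    using card_lists_length_eq[of "{0, 1::nat}" n] unfolding U_def by (simp add: numeral_2_eq_2)
  moreover have "card Cf = card (states A) * growth G X (K * T (2 * n + 1))"
    unfolding Cf_def growth_def by (simp add: card_cartesian_product)
  ultimately show ?thesis by simp
qed

end

theorem theorem4p5:
  fixes G :: "('g, 'b) monoid_scheme" and p :: "real poly"
  assumes "group G"
    and "\<exists>X. finite_gen_set G X \<and> polynomial_growth G X"
  shows "\<not> ((CF :: nat list set set) \<subseteq> weak_time_class G (\<lambda>n. poly p (real n)))"
proof
  assume "(CF :: nat list set set) \<subseteq> weak_time_class G (\<lambda>n. poly p (real n))"
  then obtain A :: "(nat, 'g) gaut" where A: "is_gaut G A" "gaut_lang G A = marked_palindromes"
      "\<forall>w\<in>marked_palindromes. \<exists>k. real k \<le> poly p (real (length w)) \<and> accepting_comp G A w k"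
    using marked_palindromes_in_CF unfolding weak_time_class_def by blast
  interpret group G by (rule assms(1))
  obtain X where X: "finite X" "X \<subseteq> carrier G" "generate G X = carrier G" "polynomial_growth G X"
    using assms(2) unfolding finite_gen_set_def by blast
  obtain K where K: "gaut_labels A \<subseteq> ball_words G X K"
    using finite_subset_ball_words[OF X(2) finite_gaut_labels[OF A(1)]]
      gaut_labels_subset_carrier[OF A(1)] X(3) by blast
  obtain T where T: "poly_bounded T" "\<And>n. poly p (real n) \<le> real (T n)"
    using poly_dominated_by_poly_bounded by blast
  have "\<forall>w\<in>marked_palindromes. \<exists>k\<le>T (length w). accepting_comp G A w k"
    using A(3) T(2) by (meson of_nat_le_iff order_trans)
  then have "2 ^ n \<le> card (states A) * growth G X (K * T (2 * n + 1))" for n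
    using two_pow_le_card_states_mult_growth[OF X(1,2) A(1) K] A(2) by blast
  moreover have "poly_bounded (\<lambda>n. card (states A) * growth G X (K * T (2 * n + 1)))"
    by (intro poly_bounded_mult poly_bounded_const
        poly_bounded_comp[OF polynomial_growth_imp_poly_bounded[OF X(4)]]
        poly_bounded_comp[OF T(1) poly_bounded_affine])
  ultimately show False using poly_bounded_less_two_pow by (meson not_less)
qed

end
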